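(* For $n\ge 0$ let $L_n$ be the lattice consisting of a bottom element $\perp$, a top element $\top$, and $n$ pairwise incomparable elements $a_1,\dots,a_n$ with $\perp<a_i<\top$ for all $i$ (so $L_0$ is the two-element chain and $L_1$ is the three-element chain). Then $|\mathrm{Tr}(L_n)|=2^{n+1}+n$. Furthermore, for $n\ge 1$, the lattice $\mathrm{Tr}(L_n)$ is the disjoint union of three subsets $B$, $M$, $T$, where $B\cong[1]^n$ and $T\cong[1]^n$ as subposets (Boolean lattices on $n$ atoms), $M$ has $n$ elements, and the covering relations of $\mathrm{Tr}(L_n)$ are exactly those internal to $B$, those internal to $T$, and the following: (i) there is a bijection between the $n$ elements of $B$ covered by $\max B$ and the elements of $M$, and each element of $M$ covers exactly its corresponding element of $B$; (ii) there is a bijection between the $n$ elements of $T$ covering $\min T$ and the elements of $M$, and each such element of $T$ covers exactly its corresponding element of $M$; (iii) $\min T$ covers $\max B$. Explicitly, $B$ consists of the transfer systems whose non-reflexive relations form a subset of $\{\perp\,R\,a_i\}$; $T$ consists of those containing all $\perp\,R\,a_i$, $\perp\,R\,\top$, and a subset of $\{a_i\,R\,\top\}$; $M$ consists of, for each $i$, the transfer system whose non-reflexive relations are $a_i\,R\,\top$ and $\perp\,R\,a_j$ for all $j\ne i$.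
   Context: For a finite lattice $(P,\le)$, a transfer system on $P$ is a partial order $R$ on $P$ refining $\le$ (i.e. $x\,R\,y\Rightarrow x\le y$) that is closed under restriction: if $x\,R\,z$ and $y\le z$ then $(x\wedge y)\,R\,y$. $\mathrm{Tr}(P)$ denotes the set of transfer systems on $P$, partially ordered by inclusion of relations ($R\le R'$ iff $x\,R\,y\Rightarrow x\,R'\,y$); it is a finite lattice. *)

theory Defs
  imports Main
begin

definition lat_meet :: "'a set \<Rightarrow> ('a \<Rightarrow> 'a \<Rightarrow> bool) \<Rightarrow> 'a \<Rightarrow> 'a \<Rightarrow> 'a" where
  "lat_meet P le x y =
     (THE m. m \<in> P \<and> le m x \<and> le m y \<and> (\<forall>w\<in>P. le w x \<and> le w y \<longrightarrow> le w m))"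

definition transfer_system :: "'a set \<Rightarrow> ('a \<Rightarrow> 'a \<Rightarrow> bool) \<Rightarrow> ('a \<times> 'a) set \<Rightarrow> bool" where
  "transfer_system P le R \<longleftrightarrow>
     R \<subseteq> P \<times> P \<and> refl_on P R \<and> antisym R \<and> trans R \<and>
     (\<forall>x y. (x, y) \<in> R \<longrightarrow> le x y) \<and>
     (\<forall>x y z. (x, z) \<in> R \<longrightarrow> y \<in> P \<longrightarrow> le y z \<longrightarrow> (lat_meet P le x y, y) \<in> R)"

definition Tr :: "'a set \<Rightarrow> ('a \<Rightarrow> 'a \<Rightarrow> bool) \<Rightarrow> ('a \<times> 'a) set set" where
  "Tr P le = {R. transfer_system P le R}"

definition covers :: "'b set set \<Rightarrow> 'b set \<Rightarrow> 'b set \<Rightarrow> bool" where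
  "covers S X Y \<longleftrightarrow> X \<in> S \<and> Y \<in> S \<and> X \<subset> Y \<and> \<not> (\<exists>Z\<in>S. X \<subset> Z \<and> Z \<subset> Y)"

datatype elt = Bot | At nat | Top

definition Ln :: "nat \<Rightarrow> elt set" where
  "Ln n = {Bot, Top} \<union> At ` {..<n}"

fun Ln_le :: "elt \<Rightarrow> elt \<Rightarrow> bool" where
  "Ln_le Bot _ = True"
| "Ln_le _ Top = True"
| "Ln_le (At i) (At j) = (i = j)"
| "Ln_le _ _ = False"

abbreviation TrL :: "nat \<Rightarrow> (elt \<times> elt) set set" where
  "TrL n \<equiv> Tr (Ln n) Ln_le"

definition Bset :: "nat \<Rightarrow> (elt \<times> elt) set set" where
  "Bset n = {R \<in> TrL n. R - Id \<subseteq> {(Bot, At i) | i. i < n}}"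

definition Tset :: "nat \<Rightarrow> (elt \<times> elt) set set" where
  "Tset n = {R \<in> TrL n. (\<forall>i<n. (Bot, At i) \<in> R) \<and> (Bot, Top) \<in> R \<and>
     R - Id \<subseteq> {(Bot, At i) | i. i < n} \<union> {(Bot, Top)} \<union> {(At i, Top) | i. i < n}}"

definition Mrel :: "nat \<Rightarrow> nat \<Rightarrow> (elt \<times> elt) set" where
  "Mrel n i = Id_on (Ln n) \<union> {(At i, Top)} \<union> {(Bot, At j) | j. j < n \<and> j \<noteq> i}"

definition Mset :: "nat \<Rightarrow> (elt \<times> elt) set set" where
  "Mset n = Mrel n ` {..<n}"

end

theory Submission
  imports Defs
begin

text \<open>A transfer system \<open>R\<close> on \<open>L\<^sub>n\<close> is determined by \<open>A = {i. \<bottom> R a\<^sub>i}\<close>,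
  \<open>C = {i. a\<^sub>i R \<top>}\<close> and the bit \<open>b = (\<bottom> R \<top>)\<close>, and inclusion of transfer systems is
  inclusion of these parameters. Restricting \<open>\<bottom> R \<top>\<close> and \<open>a\<^sub>i R \<top>\<close> to the atoms, and
  transitivity through \<open>\<bottom> R a\<^sub>i R \<top>\<close>, leave exactly three shapes: \<open>b\<close> false and \<open>C\<close> empty
  (the Boolean lattice \<open>B\<close>); \<open>b\<close> false and \<open>C = {i}\<close>, which forces \<open>A\<close> to be all indices
  but \<open>i\<close> (the \<open>n\<close> elements of \<open>M\<close>); or \<open>b\<close> true, which forces \<open>A\<close> to be all indices
  and leaves \<open>C\<close> free (the Boolean lattice \<open>T\<close>). Since \<open>B\<close> is a down-set and \<open>T\<close> an up-set,
  covers inside them are covers in \<open>Tr(L\<^sub>n)\<close>; every other cover runs between adjacent shapes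
  and is pinned down by the single candidate lying between its endpoints.\<close>

subsection \<open>Covers in families of sets\<close>

lemma coversD:
  assumes "covers S X Y"
  shows "X \<in> S" "Y \<in> S" "X \<subset> Y"
  using assms unfolding covers_def by simp_all

lemma coversI:
  assumes "X \<in> S" "Y \<in> S" "X \<subset> Y" "\<And>Z. Z \<in> S \<Longrightarrow> X \<subseteq> Z \<Longrightarrow> Z \<subseteq> Y \<Longrightarrow> Z = X \<or> Z = Y"
  shows "covers S X Y"
proof -
  have "\<not> (X \<subset> Z \<and> Z \<subset> Y)" if "Z \<in> S" for Z
    using assms(4)[OF that] by auto
  with assms(1-3) show ?thesis
    unfolding covers_def by blast
qed

lemma covers_between:
  assumes "covers S X Y" "Z \<in> S" "X \<subseteq> Z" "Z \<subseteq> Y"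
  shows "Z = X \<or> Z = Y"
  using assms unfolding covers_def by auto

lemma covers_insert:
  assumes "X \<in> S" "insert p X \<in> S" "p \<notin> X"
  shows "covers S X (insert p X)"
proof -
  have "\<not> (X \<subset> Z \<and> Z \<subset> insert p X)" for Z
  proof
    assume Z: "X \<subset> Z \<and> Z \<subset> insert p X"
    then have "p \<in> Z" by blast
    then show False using Z by blast
  qed
  with assms show ?thesis
    unfolding covers_def by blast
qed

lemma covers_subfamily:
  "covers S' X Y \<Longrightarrow> S \<subseteq> S' \<Longrightarrow> X \<in> S \<Longrightarrow> Y \<in> S \<Longrightarrow> covers S X Y"
  unfolding covers_def by blast

lemma covers_convex_superfamily:
  assumes "covers S X Y" "S \<subseteq> S'" "\<And>Z. Z \<in> S' \<Longrightarrow> X \<subseteq> Z \<Longrightarrow> Z \<subseteq> Y \<Longrightarrow> Z \<in> S"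
  shows "covers S' X Y"
proof -
  have "\<not> (X \<subset> Z \<and> Z \<subset> Y)" if "Z \<in> S'" for Z
    using assms(1) assms(3)[OF that] unfolding covers_def by (meson psubset_imp_subset)
  with assms(1,2) show ?thesis
    unfolding covers_def by blast
qed

subsection \<open>Meets in \<open>L\<^sub>n\<close>\<close>

lemma Ln_mem [simp]: "Bot \<in> Ln n" "Top \<in> Ln n" "At i \<in> Ln n \<longleftrightarrow> i < n"
  by (auto simp: Ln_def)

lemma Ln_le_refl [simp]: "Ln_le x x"
  by (cases x) auto

lemma Ln_le_antisym: "Ln_le x y \<Longrightarrow> Ln_le y x \<Longrightarrow> x = y"
  by (cases x; cases y) auto

fun Ln_meet :: "elt \<Rightarrow> elt \<Rightarrow> elt" where
  "Ln_meet Bot y = Bot"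
| "Ln_meet (At i) Bot = Bot"
| "Ln_meet (At i) (At j) = (if i = j then At i else Bot)"
| "Ln_meet (At i) Top = At i"
| "Ln_meet Top y = y"

lemma Ln_meet_le: "Ln_le (Ln_meet x y) x" "Ln_le (Ln_meet x y) y"
  by (cases x; cases y; auto)+

lemma Ln_meet_greatest: "Ln_le w x \<Longrightarrow> Ln_le w y \<Longrightarrow> Ln_le w (Ln_meet x y)"
  by (cases w; cases x; cases y) auto

lemma Ln_meet_mem: "x \<in> Ln n \<Longrightarrow> y \<in> Ln n \<Longrightarrow> Ln_meet x y \<in> Ln n"
  by (cases x; cases y) (auto simp: Ln_def)

lemma lat_meet_Ln:
  assumes "x \<in> Ln n" "y \<in> Ln n"
  shows "lat_meet (Ln n) Ln_le x y = Ln_meet x y"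
  unfolding lat_meet_def
proof (rule the_equality)
  show "Ln_meet x y \<in> Ln n \<and> Ln_le (Ln_meet x y) x \<and> Ln_le (Ln_meet x y) y \<and>
      (\<forall>w\<in>Ln n. Ln_le w x \<and> Ln_le w y \<longrightarrow> Ln_le w (Ln_meet x y))"
    using Ln_meet_mem[OF assms] Ln_meet_le Ln_meet_greatest by blast
next
  fix m
  assume m: "m \<in> Ln n \<and> Ln_le m x \<and> Ln_le m y \<and> (\<forall>w\<in>Ln n. Ln_le w x \<and> Ln_le w y \<longrightarrow> Ln_le w m)"
  then show "m = Ln_meet x y"
    using Ln_meet_mem[OF assms] Ln_meet_le Ln_meet_greatest Ln_le_antisym by blast
qed

subsection \<open>Parametrising the transfer systems on \<open>L\<^sub>n\<close>\<close>

definition Ln_rel :: "nat \<Rightarrow> nat set \<Rightarrow> bool \<Rightarrow> nat set \<Rightarrow> (elt \<times> elt) set" where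
  "Ln_rel n A b C = Id_on (Ln n) \<union> {(Bot, At i) | i. i \<in> A} \<union> (if b then {(Bot, Top)} else {})
     \<union> {(At i, Top) | i. i \<in> C}"

lemma mem_Ln_rel:
  "(x, y) \<in> Ln_rel n A b C \<longleftrightarrow> (x = y \<and> x \<in> Ln n) \<or> (x = Bot \<and> (\<exists>i\<in>A. y = At i))
     \<or> (b \<and> x = Bot \<and> y = Top) \<or> (y = Top \<and> (\<exists>i\<in>C. x = At i))"
  by (auto simp: Ln_rel_def)

lemma Ln_rel_Bot_At [simp]: "(Bot, At i) \<in> Ln_rel n A b C \<longleftrightarrow> i \<in> A"
  and Ln_rel_Bot_Top [simp]: "(Bot, Top) \<in> Ln_rel n A b C \<longleftrightarrow> b"
  and Ln_rel_At_Top [simp]: "(At i, Top) \<in> Ln_rel n A b C \<longleftrightarrow> i \<in> C"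
  by (auto simp: mem_Ln_rel)

lemma Ln_rel_subset_iff:
  "Ln_rel n A b C \<subseteq> Ln_rel n A' b' C' \<longleftrightarrow> A \<subseteq> A' \<and> (b \<longrightarrow> b') \<and> C \<subseteq> C'"
proof
  assume sub: "Ln_rel n A b C \<subseteq> Ln_rel n A' b' C'"
  have "A \<subseteq> A'"
  proof
    fix i assume "i \<in> A"
    then have "(Bot, At i) \<in> Ln_rel n A b C" by simp
    then have "(Bot, At i) \<in> Ln_rel n A' b' C'" by (rule subsetD[OF sub])
    then show "i \<in> A'" by simp
  qed
  moreover have "b \<longrightarrow> b'"
    using sub Ln_rel_Bot_Top by blast
  moreover have "C \<subseteq> C'"
  proof
    fix i assume "i \<in> C"
    then have "(At i, Top) \<in> Ln_rel n A b C" by simp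
    then have "(At i, Top) \<in> Ln_rel n A' b' C'" by (rule subsetD[OF sub])
    then show "i \<in> C'" by simp
  qed
  ultimately show "A \<subseteq> A' \<and> (b \<longrightarrow> b') \<and> C \<subseteq> C'" by blast
qed (auto simp: Ln_rel_def)

lemma Ln_rel_eq_iff: "Ln_rel n A b C = Ln_rel n A' b' C' \<longleftrightarrow> A = A' \<and> b = b' \<and> C = C'"
  by (auto simp: set_eq_subset Ln_rel_subset_iff)

text \<open>The three closure conditions come from restricting \<open>\<bottom> R \<top>\<close> and \<open>a\<^sub>i R \<top>\<close> along
  \<open>a\<^sub>j \<le> \<top>\<close> (using \<open>\<bottom> \<sqinter> a\<^sub>j = \<bottom>\<close> and \<open>a\<^sub>i \<sqinter> a\<^sub>j = \<bottom>\<close> for \<open>i \<noteq> j\<close>) and from transitivity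
  through \<open>\<bottom> R a\<^sub>i R \<top>\<close>.\<close>
definition Ln_admissible :: "nat \<Rightarrow> nat set \<Rightarrow> bool \<Rightarrow> nat set \<Rightarrow> bool" where
  "Ln_admissible n A b C \<longleftrightarrow> A \<subseteq> {..<n} \<and> C \<subseteq> {..<n} \<and> (b \<longrightarrow> A = {..<n}) \<and>
     (\<forall>i\<in>C. \<forall>j<n. j \<noteq> i \<longrightarrow> j \<in> A) \<and> (\<forall>i\<in>C. i \<in> A \<longrightarrow> b)"

lemma transfer_system_Ln_rel:
  assumes "Ln_admissible n A b C"
  shows "transfer_system (Ln n) Ln_le (Ln_rel n A b C)"
proof -
  let ?R = "Ln_rel n A b C"
  have A: "A \<subseteq> {..<n}" and C: "C \<subseteq> {..<n}" and b: "b \<longrightarrow> A = {..<n}"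
    and others: "\<forall>i\<in>C. \<forall>j<n. j \<noteq> i \<longrightarrow> j \<in> A" and trans_cond: "\<forall>i\<in>C. i \<in> A \<longrightarrow> b"
    using assms unfolding Ln_admissible_def by blast+
  have field: "?R \<subseteq> Ln n \<times> Ln n"
    using subsetD[OF A] subsetD[OF C] by (auto simp: mem_Ln_rel)
  have meet_closed: "(Ln_meet x y, y) \<in> ?R"
    if xz: "(x, z) \<in> ?R" and y: "y \<in> Ln n" and yz: "Ln_le y z" for x y z
  proof -
    from xz consider "x = z" | i where "x = Bot" "i \<in> A" "z = At i" | "x = Bot" "z = Top"
      | i where "z = Top" "i \<in> C" "x = At i"
      unfolding mem_Ln_rel by blast
    then show ?thesis
    proof cases
      case 1
      then show ?thesis using y yz by (cases y; cases z) (auto simp: mem_Ln_rel)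
    next
      case 2
      then show ?thesis using y yz by (cases y) (auto simp: mem_Ln_rel)
    next
      case 3
      then have "b" "A = {..<n}" using xz b by auto
      then show ?thesis using 3 y by (cases y) (auto simp: mem_Ln_rel)
    next
      case (4 i)
      have "j \<in> A" if "j < n" "j \<noteq> i" for j
        using others 4(2) that by blast
      then show ?thesis using 4 y by (cases y) (auto simp: mem_Ln_rel)
    qed
  qed
  have "(lat_meet (Ln n) Ln_le x y, y) \<in> ?R"
    if "(x, z) \<in> ?R" "y \<in> Ln n" "Ln_le y z" for x y z
  proof -
    have "x \<in> Ln n" using that(1) field by blast
    then show ?thesis using meet_closed[OF that] lat_meet_Ln that(2) by simp
  qed
  moreover have "refl_on (Ln n) ?R" "antisym ?R" "\<forall>x y. (x, y) \<in> ?R \<longrightarrow> Ln_le x y"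
    by (auto simp: refl_on_def antisym_def mem_Ln_rel)
  moreover have "trans ?R"
    using trans_cond by (auto simp: trans_def mem_Ln_rel)
  ultimately show ?thesis
    unfolding transfer_system_def using field by blast
qed

lemma transfer_system_Ln_eq_Ln_rel:
  assumes "transfer_system (Ln n) Ln_le R"
  shows "R = Ln_rel n {i. i < n \<and> (Bot, At i) \<in> R} ((Bot, Top) \<in> R) {i. i < n \<and> (At i, Top) \<in> R}"
    (is "R = ?S")
proof
  have field: "R \<subseteq> Ln n \<times> Ln n" and refl: "\<forall>x\<in>Ln n. (x, x) \<in> R"
    and le: "\<forall>x y. (x, y) \<in> R \<longrightarrow> Ln_le x y"
    using assms unfolding transfer_system_def refl_on_def by blast+
  show "R \<subseteq> ?S"
  proof
    fix p assume p: "p \<in> R"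
    obtain x y where xy: "p = (x, y)" by force
    have "x \<in> Ln n" "y \<in> Ln n" "Ln_le x y"
      using p xy field le by auto
    then show "p \<in> ?S"
      using p xy by (cases x; cases y) (auto simp: mem_Ln_rel)
  qed
  show "?S \<subseteq> R"
    using refl by (auto simp: Ln_rel_def)
qed

lemma transfer_system_LnE:
  assumes ts: "transfer_system (Ln n) Ln_le R"
  obtains A b C where "Ln_admissible n A b C" "R = Ln_rel n A b C"
proof
  define A where "A = {i. i < n \<and> (Bot, At i) \<in> R}"
  define C where "C = {i. i < n \<and> (At i, Top) \<in> R}"
  define b where "b = ((Bot, Top) \<in> R)"
  show "R = Ln_rel n A b C"
    unfolding A_def b_def C_def by (rule transfer_system_Ln_eq_Ln_rel[OF ts])
  have field: "R \<subseteq> Ln n \<times> Ln n" and "trans R"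
    and restr: "\<forall>x y z. (x, z) \<in> R \<longrightarrow> y \<in> Ln n \<longrightarrow> Ln_le y z \<longrightarrow> (lat_meet (Ln n) Ln_le x y, y) \<in> R"
    using ts unfolding transfer_system_def by blast+
  have restr_Top: "(Ln_meet x (At j), At j) \<in> R" if "(x, Top) \<in> R" "j < n" for x j
  proof -
    have "(lat_meet (Ln n) Ln_le x (At j), At j) \<in> R"
      using restr that by simp
    moreover have "x \<in> Ln n"
      using field that(1) by blast
    ultimately show ?thesis
      using lat_meet_Ln that(2) by simp
  qed
  have "b \<longrightarrow> A = {..<n}"
    using restr_Top[of Bot] by (auto simp: A_def b_def)
  moreover have "(Bot, At j) \<in> R" if "(At i, Top) \<in> R" "j < n" "j \<noteq> i" for i j
    using restr_Top[OF that(1,2)] that(3) by simp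
  then have "\<forall>i\<in>C. \<forall>j<n. j \<noteq> i \<longrightarrow> j \<in> A"
    by (auto simp: A_def C_def)
  moreover have "\<forall>i\<in>C. i \<in> A \<longrightarrow> b"
    using \<open>trans R\<close> unfolding A_def C_def b_def trans_def by blast
  ultimately show "Ln_admissible n A b C"
    unfolding Ln_admissible_def A_def C_def by blast
qed

lemma TrL_eq_Ln_rel: "TrL n = {Ln_rel n A b C | A b C. Ln_admissible n A b C}"
  unfolding Tr_def by (blast intro: transfer_system_Ln_rel elim: transfer_system_LnE)

lemma Ln_rel_mem_TrL: "Ln_admissible n A b C \<Longrightarrow> Ln_rel n A b C \<in> TrL n"
  unfolding TrL_eq_Ln_rel by blast

lemma Ln_admissible_iff:
  "Ln_admissible n A b C \<longleftrightarrow>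
     (A \<subseteq> {..<n} \<and> \<not> b \<and> C = {}) \<or>
     (\<exists>i<n. A = {..<n} - {i} \<and> \<not> b \<and> C = {i}) \<or>
     (A = {..<n} \<and> b \<and> C \<subseteq> {..<n})"
proof
  assume "Ln_admissible n A b C"
  then have A: "A \<subseteq> {..<n}" and C: "C \<subseteq> {..<n}" and b: "b \<longrightarrow> A = {..<n}"
    and others: "\<forall>i\<in>C. \<forall>j<n. j \<noteq> i \<longrightarrow> j \<in> A" and trans_cond: "\<forall>i\<in>C. i \<in> A \<longrightarrow> b"
    unfolding Ln_admissible_def by blast+
  show "(A \<subseteq> {..<n} \<and> \<not> b \<and> C = {}) \<or> (\<exists>i<n. A = {..<n} - {i} \<and> \<not> b \<and> C = {i}) \<or>
      (A = {..<n} \<and> b \<and> C \<subseteq> {..<n})"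
  proof (cases "b \<or> C = {}")
    case True
    then show ?thesis
      using A C b by (cases b) simp_all
  next
    case False
    then obtain i where i: "i \<in> C" and "\<not> b" by blast
    then have "i \<notin> A" "i < n"
      using trans_cond C by auto
    have "A = {..<n} - {i}"
      using A others i \<open>i \<notin> A\<close> by auto
    moreover have "C = {i}"
      using others i \<open>i < n\<close> \<open>i \<notin> A\<close> by auto
    ultimately show ?thesis
      using \<open>i < n\<close> \<open>\<not> b\<close> by auto
  qed
qed (auto simp: Ln_admissible_def)

subsection \<open>The three blocks\<close>

abbreviation "Btop n \<equiv> Ln_rel n {..<n} False {}"
abbreviation "Tbot n \<equiv> Ln_rel n {..<n} True {}"
abbreviation "Bcoatom n i \<equiv> Ln_rel n ({..<n} - {i}) False {}"
abbreviation "Tatom n i \<equiv> Ln_rel n {..<n} True {i}"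

lemma Mrel_eq_Ln_rel: "Mrel n i = Ln_rel n ({..<n} - {i}) False {i}"
  by (auto simp: Mrel_def Ln_rel_def)

lemma Ln_rel_minus_Id:
  "Ln_rel n A b C - Id = {(Bot, At i) | i. i \<in> A} \<union> (if b then {(Bot, Top)} else {})
     \<union> {(At i, Top) | i. i \<in> C}"
  by (auto simp: Ln_rel_def)

lemma Bset_eq: "Bset n = (\<lambda>A. Ln_rel n A False {}) ` Pow {..<n}"
proof
  show "Bset n \<subseteq> (\<lambda>A. Ln_rel n A False {}) ` Pow {..<n}"
  proof
    fix R assume "R \<in> Bset n"
    then obtain A b C where adm: "Ln_admissible n A b C" and R: "R = Ln_rel n A b C"
      and small: "R - Id \<subseteq> {(Bot, At i) | i. i < n}"
      unfolding Bset_def TrL_eq_Ln_rel by blast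
    have "\<not> b" "C = {}"
      using small unfolding R Ln_rel_minus_Id by auto
    then show "R \<in> (\<lambda>A. Ln_rel n A False {}) ` Pow {..<n}"
      using adm R unfolding Ln_admissible_def by (intro image_eqI[of _ _ A]) auto
  qed
  show "(\<lambda>A. Ln_rel n A False {}) ` Pow {..<n} \<subseteq> Bset n"
  proof
    fix R assume "R \<in> (\<lambda>A. Ln_rel n A False {}) ` Pow {..<n}"
    then obtain A where A: "A \<subseteq> {..<n}" and R: "R = Ln_rel n A False {}" by blast
    have "R \<in> TrL n"
      using A unfolding R by (intro Ln_rel_mem_TrL) (simp add: Ln_admissible_def)
    moreover have "R - Id \<subseteq> {(Bot, At i) | i. i < n}"
      using A unfolding R Ln_rel_minus_Id by auto
    ultimately show "R \<in> Bset n"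
      unfolding Bset_def by blast
  qed
qed

lemma Tset_eq: "Tset n = (\<lambda>C. Ln_rel n {..<n} True C) ` Pow {..<n}"
proof
  show "Tset n \<subseteq> (\<lambda>C. Ln_rel n {..<n} True C) ` Pow {..<n}"
  proof
    fix R assume "R \<in> Tset n"
    then obtain A b C where adm: "Ln_admissible n A b C" and R: "R = Ln_rel n A b C"
      and "(Bot, Top) \<in> R"
      unfolding Tset_def TrL_eq_Ln_rel by blast
    then have "b" by simp
    then show "R \<in> (\<lambda>C. Ln_rel n {..<n} True C) ` Pow {..<n}"
      using adm R unfolding Ln_admissible_def by (intro image_eqI[of _ _ C]) auto
  qed
  show "(\<lambda>C. Ln_rel n {..<n} True C) ` Pow {..<n} \<subseteq> Tset n"
  proof
    fix R assume "R \<in> (\<lambda>C. Ln_rel n {..<n} True C) ` Pow {..<n}"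
    then obtain C where C: "C \<subseteq> {..<n}" and R: "R = Ln_rel n {..<n} True C" by blast
    have "R \<in> TrL n"
      using C unfolding R by (intro Ln_rel_mem_TrL) (auto simp: Ln_admissible_def)
    moreover have "R - Id \<subseteq> {(Bot, At i) | i. i < n} \<union> {(Bot, Top)} \<union> {(At i, Top) | i. i < n}"
      using C unfolding R Ln_rel_minus_Id by auto
    ultimately show "R \<in> Tset n"
      unfolding Tset_def R by simp
  qed
qed

lemma Mset_eq: "Mset n = (\<lambda>i. Ln_rel n ({..<n} - {i}) False {i}) ` {..<n}"
  by (simp add: Mset_def Mrel_eq_Ln_rel)

lemma TrL_eq_blocks: "TrL n = Bset n \<union> Mset n \<union> Tset n"
proof (intro equalityI subsetI)
  fix R assume "R \<in> TrL n"
  then obtain A b C where adm: "Ln_admissible n A b C" and R: "R = Ln_rel n A b C"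
    unfolding TrL_eq_Ln_rel by blast
  from adm show "R \<in> Bset n \<union> Mset n \<union> Tset n"
    unfolding Ln_admissible_iff R Bset_eq Mset_eq Tset_eq by auto
next
  have "Mset n \<subseteq> TrL n"
    unfolding Mset_eq by (auto intro!: Ln_rel_mem_TrL simp: Ln_admissible_iff)
  then show "R \<in> TrL n" if "R \<in> Bset n \<union> Mset n \<union> Tset n" for R
    using that unfolding Bset_def Tset_def by blast
qed

lemma blocks_disjoint: "Bset n \<inter> Mset n = {}" "Bset n \<inter> Tset n = {}" "Mset n \<inter> Tset n = {}"
  by (auto simp: Bset_eq Mset_eq Tset_eq Ln_rel_eq_iff)

lemma bij_betw_Bset: "bij_betw (\<lambda>A. Ln_rel n A False {}) (Pow {..<n}) (Bset n)"
  unfolding Bset_eq by (rule bij_betw_imageI) (auto simp: inj_on_def Ln_rel_eq_iff)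

lemma bij_betw_Tset: "bij_betw (\<lambda>C. Ln_rel n {..<n} True C) (Pow {..<n}) (Tset n)"
  unfolding Tset_eq by (rule bij_betw_imageI) (auto simp: inj_on_def Ln_rel_eq_iff)

lemma bij_betw_Mset: "bij_betw (Mrel n) {..<n} (Mset n)"
  unfolding Mset_def by (rule bij_betw_imageI) (auto simp: inj_on_def Mrel_eq_Ln_rel Ln_rel_eq_iff)

lemma card_TrL: "card (TrL n) = 2 ^ (n + 1) + n"
proof -
  have "card (Bset n) = 2 ^ n" "card (Tset n) = 2 ^ n" "card (Mset n) = n"
    using bij_betw_same_card[OF bij_betw_Bset] bij_betw_same_card[OF bij_betw_Tset]
      bij_betw_same_card[OF bij_betw_Mset] by (simp_all add: card_Pow)
  moreover have "finite (Bset n)" "finite (Tset n)" "finite (Mset n)"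
    using bij_betw_finite[OF bij_betw_Bset] bij_betw_finite[OF bij_betw_Tset]
      bij_betw_finite[OF bij_betw_Mset] by simp_all
  ultimately show ?thesis
    unfolding TrL_eq_blocks using blocks_disjoint[of n]
    by (simp add: card_Un_disjoint Int_Un_distrib2)
qed

lemma Ln_rel_insert:
  "insert (Bot, At i) (Ln_rel n A b C) = Ln_rel n (insert i A) b C"
  "insert (At i, Top) (Ln_rel n A b C) = Ln_rel n A b (insert i C)"
  "insert (Bot, Top) (Ln_rel n A False C) = Ln_rel n A True C"
  by (auto simp: Ln_rel_def)

lemma Bset_mem: "A \<subseteq> {..<n} \<Longrightarrow> Ln_rel n A False {} \<in> Bset n"
  unfolding Bset_eq by blast

lemma Tset_mem: "C \<subseteq> {..<n} \<Longrightarrow> Ln_rel n {..<n} True C \<in> Tset n"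
  unfolding Tset_eq by blast

lemma BsetE:
  assumes "X \<in> Bset n"
  obtains A where "A \<subseteq> {..<n}" "X = Ln_rel n A False {}"
  using assms unfolding Bset_eq by blast

lemma TsetE:
  assumes "X \<in> Tset n"
  obtains C where "C \<subseteq> {..<n}" "X = Ln_rel n {..<n} True C"
  using assms unfolding Tset_eq by blast

lemma Tset_Bot_Top: "X \<in> Tset n \<Longrightarrow> (Bot, Top) \<in> X"
  by (elim TsetE) simp

lemma Bset_subset_TrL: "Bset n \<subseteq> TrL n"
  and Mset_subset_TrL: "Mset n \<subseteq> TrL n"
  and Tset_subset_TrL: "Tset n \<subseteq> TrL n"
  unfolding TrL_eq_blocks by blast+

lemma Bset_downward_closed: "Y \<in> Bset n \<Longrightarrow> X \<in> TrL n \<Longrightarrow> X \<subseteq> Y \<Longrightarrow> X \<in> Bset n"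
  unfolding Bset_def by blast

lemma Tset_upward_closed:
  assumes "X \<in> Tset n" "Y \<in> TrL n" "X \<subseteq> Y"
  shows "Y \<in> Tset n"
proof -
  obtain A b C where adm: "Ln_admissible n A b C" and Y: "Y = Ln_rel n A b C"
    using assms(2) unfolding TrL_eq_Ln_rel by blast
  have "b"
    using Tset_Bot_Top[OF assms(1)] assms(3) Y by auto
  then show ?thesis
    using adm unfolding Y Ln_admissible_def by (auto intro: Tset_mem)
qed

lemma Bset_subset_Btop: "X \<in> Bset n \<Longrightarrow> X \<subseteq> Btop n"
  by (elim BsetE) (simp add: Ln_rel_subset_iff)

lemma Tbot_subset_Tset: "X \<in> Tset n \<Longrightarrow> Tbot n \<subseteq> X"
  by (elim TsetE) (simp add: Ln_rel_subset_iff)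

lemma Greatest_Bset: "(GREATEST X. X \<in> Bset n) = Btop n"
  by (rule Greatest_equality) (simp_all add: Bset_mem Bset_subset_Btop)

lemma Least_Tset: "(LEAST X. X \<in> Tset n) = Tbot n"
  by (rule Least_equality) (simp_all add: Tset_mem Tbot_subset_Tset)

lemma Bset_lower_covers_Btop:
  "{X. covers (Bset n) X (Btop n)} = Bcoatom n ` {..<n}"
proof (intro equalityI subsetI)
  fix X assume "X \<in> {X. covers (Bset n) X (Btop n)}"
  then have cov: "covers (Bset n) X (Btop n)" by simp
  obtain A where A: "A \<subseteq> {..<n}" and X: "X = Ln_rel n A False {}"
    using coversD(1)[OF cov] by (rule BsetE)
  have "A \<noteq> {..<n}"
    using coversD(3)[OF cov] unfolding X by auto
  then obtain i where i: "i < n" "i \<notin> A"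
    using A by auto
  have "Bcoatom n i = X \<or> Bcoatom n i = Btop n"
    using i A by (intro covers_between[OF cov]) (auto intro: Bset_mem simp: X Ln_rel_subset_iff)
  then show "X \<in> Bcoatom n ` {..<n}"
    using i by (auto simp: Ln_rel_eq_iff)
next
  fix X assume "X \<in> Bcoatom n ` {..<n}"
  then obtain i where i: "i < n" and X: "X = Bcoatom n i" by blast
  have top: "insert (Bot, At i) (Bcoatom n i) = Btop n"
    using i by (simp add: Ln_rel_insert insert_absorb)
  have "covers (Bset n) (Bcoatom n i) (Btop n)"
    unfolding top[symmetric] by (rule covers_insert) (simp_all add: Bset_mem top)
  then show "X \<in> {X. covers (Bset n) X (Btop n)}"
    using X by simp
qed

lemma Tset_upper_covers_Tbot:
  "{Y. covers (Tset n) (Tbot n) Y} = Tatom n ` {..<n}"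
proof (intro equalityI subsetI)
  fix Y assume "Y \<in> {Y. covers (Tset n) (Tbot n) Y}"
  then have cov: "covers (Tset n) (Tbot n) Y" by simp
  obtain C where C: "C \<subseteq> {..<n}" and Y: "Y = Ln_rel n {..<n} True C"
    using coversD(2)[OF cov] by (rule TsetE)
  have "C \<noteq> {}"
    using coversD(3)[OF cov] unfolding Y by auto
  then obtain i where i: "i \<in> C"
    by blast
  have "Tatom n i = Tbot n \<or> Tatom n i = Y"
    using i C by (intro covers_between[OF cov]) (auto intro: Tset_mem simp: Y Ln_rel_subset_iff)
  then show "Y \<in> Tatom n ` {..<n}"
    using i C by (auto simp: Ln_rel_eq_iff)
next
  fix Y assume "Y \<in> Tatom n ` {..<n}"
  then obtain i where i: "i < n" and Y: "Y = Tatom n i" by blast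
  have atom: "insert (At i, Top) (Tbot n) = Tatom n i"
    by (simp add: Ln_rel_insert)
  have "covers (Tset n) (Tbot n) (Tatom n i)"
    unfolding atom[symmetric] by (rule covers_insert) (use i in \<open>simp_all add: Tset_mem atom\<close>)
  then show "Y \<in> {Y. covers (Tset n) (Tbot n) Y}"
    using Y by simp
qed

lemma covers_TrL_if_covers_Bset:
  assumes "covers (Bset n) X Y"
  shows "covers (TrL n) X Y"
proof (rule covers_convex_superfamily[OF assms Bset_subset_TrL])
  fix Z assume "Z \<in> TrL n" "Z \<subseteq> Y"
  moreover have "Y \<in> Bset n"
    using coversD(2)[OF assms] .
  ultimately show "Z \<in> Bset n"
    by (rule Bset_downward_closed[rotated])
qed

lemma covers_TrL_if_covers_Tset:
  assumes "covers (Tset n) X Y"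
  shows "covers (TrL n) X Y"
proof (rule covers_convex_superfamily[OF assms Tset_subset_TrL])
  fix Z assume "Z \<in> TrL n" "X \<subseteq> Z"
  moreover have "X \<in> Tset n"
    using coversD(1)[OF assms] .
  ultimately show "Z \<in> Tset n"
    using Tset_upward_closed by blast
qed

lemma Bcoatom_mem_TrL: "Bcoatom n i \<in> TrL n"
  by (rule subsetD[OF Bset_subset_TrL Bset_mem]) blast

lemma Mrel_mem_TrL: "i < n \<Longrightarrow> Mrel n i \<in> TrL n"
  by (rule subsetD[OF Mset_subset_TrL]) (simp add: Mset_def)

lemma Tatom_mem_TrL: "i < n \<Longrightarrow> Tatom n i \<in> TrL n"
  by (rule subsetD[OF Tset_subset_TrL Tset_mem]) simp

lemma covers_Bcoatom_Mrel: "i < n \<Longrightarrow> covers (TrL n) (Bcoatom n i) (Mrel n i)"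
  using covers_insert[of "Bcoatom n i" "TrL n" "(At i, Top)"] Bcoatom_mem_TrL Mrel_mem_TrL
  by (simp add: Ln_rel_insert Mrel_eq_Ln_rel)

lemma Btop_mem_TrL: "Btop n \<in> TrL n"
  by (rule subsetD[OF Bset_subset_TrL Bset_mem]) simp

lemma Tbot_mem_TrL: "Tbot n \<in> TrL n"
  by (rule subsetD[OF Tset_subset_TrL Tset_mem]) simp

lemma covers_Btop_Tbot: "covers (TrL n) (Btop n) (Tbot n)"
  using covers_insert[of "Btop n" "TrL n" "(Bot, Top)"] Btop_mem_TrL Tbot_mem_TrL
  by (simp add: Ln_rel_insert)

lemma covers_Mrel_Tatom:
  assumes i: "i < n"
  shows "covers (TrL n) (Mrel n i) (Tatom n i)"
proof (rule coversI)
  show "Mrel n i \<in> TrL n" "Tatom n i \<in> TrL n"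
    using i by (rule Mrel_mem_TrL, rule Tatom_mem_TrL)
  show "Mrel n i \<subset> Tatom n i"
    unfolding Mrel_eq_Ln_rel psubset_eq Ln_rel_subset_iff Ln_rel_eq_iff by simp
next
  fix Z assume "Z \<in> TrL n" and lower: "Mrel n i \<subseteq> Z" and upper: "Z \<subseteq> Tatom n i"
  then obtain A b C where adm: "Ln_admissible n A b C" and Z: "Z = Ln_rel n A b C"
    unfolding TrL_eq_Ln_rel by blast
  have "{i} \<subseteq> C" "C \<subseteq> {i}"
    using lower upper unfolding Z Mrel_eq_Ln_rel Ln_rel_subset_iff by simp_all
  then have "C = {i}"
    by (rule subset_antisym[rotated])
  with adm show "Z = Mrel n i \<or> Z = Tatom n i"
    unfolding Ln_admissible_iff Z Mrel_eq_Ln_rel by (elim disjE exE conjE) simp_all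
qed

lemma covers_TrL_into_Mset:
  assumes cov: "covers (TrL n) X Y" and "Y \<in> Mset n"
  shows "\<exists>i<n. X = Bcoatom n i \<and> Y = Mrel n i"
proof -
  obtain i where i: "i < n" and Y: "Y = Mrel n i"
    using assms(2) unfolding Mset_def by blast
  have XY: "X \<subset> Y"
    using coversD(3)[OF cov] .
  have "X \<notin> Mset n"
  proof
    assume "X \<in> Mset n"
    then obtain j where X: "X = Mrel n j"
      unfolding Mset_def by blast
    then have "(At j, Top) \<in> Y"
      using XY by (auto simp: Mrel_eq_Ln_rel)
    then have "j = i"
      by (simp add: Y Mrel_eq_Ln_rel)
    then show False
      using XY X Y by simp
  qed
  moreover have "X \<notin> Tset n"
    using XY Tset_Bot_Top by (force simp: Y Mrel_eq_Ln_rel)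
  ultimately have "X \<in> Bset n"
    using coversD(1)[OF cov] unfolding TrL_eq_blocks by blast
  then obtain A where A: "A \<subseteq> {..<n}" and X: "X = Ln_rel n A False {}"
    by (rule BsetE)
  have "A \<subseteq> {..<n} - {i}"
    using XY unfolding X Y Mrel_eq_Ln_rel psubset_eq Ln_rel_subset_iff by simp
  then have "Bcoatom n i = X \<or> Bcoatom n i = Y"
    by (intro covers_between[OF cov Bcoatom_mem_TrL])
      (simp_all add: X Y Mrel_eq_Ln_rel Ln_rel_subset_iff)
  moreover have "Bcoatom n i \<noteq> Y"
    by (simp add: Y Mrel_eq_Ln_rel Ln_rel_eq_iff)
  ultimately show ?thesis
    using i Y by auto
qed

lemma covers_TrL_into_Tset:
  assumes cov: "covers (TrL n) X Y" and "X \<notin> Tset n" and "Y \<in> Tset n"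
  shows "(\<exists>i<n. X = Mrel n i \<and> Y = Tatom n i) \<or> (X = Btop n \<and> Y = Tbot n)"
proof -
  obtain C where C: "C \<subseteq> {..<n}" and Y: "Y = Ln_rel n {..<n} True C"
    using assms(3) by (rule TsetE)
  have XY: "X \<subseteq> Y"
    using coversD(3)[OF cov] by (rule psubset_imp_subset)
  have "X \<in> Bset n \<union> Mset n"
    using coversD(1)[OF cov] assms(2) unfolding TrL_eq_blocks by blast
  then consider "X \<in> Bset n" | i where "i < n" "X = Mrel n i"
    unfolding Mset_def by blast
  then show ?thesis
  proof cases
    case 1
    then obtain A where A: "A \<subseteq> {..<n}" and X: "X = Ln_rel n A False {}"
      by (rule BsetE)
    have "Btop n = X \<or> Btop n = Y"
      using XY A by (intro covers_between[OF cov Btop_mem_TrL]) (simp_all add: X Y Ln_rel_subset_iff)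
    then have X_top: "X = Btop n"
      by (auto simp: Y Ln_rel_eq_iff)
    have "Tbot n = X \<or> Tbot n = Y"
      using XY by (intro covers_between[OF cov Tbot_mem_TrL]) (simp_all add: X_top Y Ln_rel_subset_iff)
    then have "Y = Tbot n"
      by (auto simp: X_top Ln_rel_eq_iff)
    with X_top show ?thesis
      by blast
  next
    case (2 i)
    have "i \<in> C"
      using XY by (simp add: 2 Y Mrel_eq_Ln_rel Ln_rel_subset_iff)
    then have "Tatom n i = X \<or> Tatom n i = Y"
      using C by (intro covers_between[OF cov Tatom_mem_TrL[OF 2(1)]])
        (simp_all add: 2 Y Mrel_eq_Ln_rel Ln_rel_subset_iff)
    then have "Y = Tatom n i"
      by (auto simp: 2 Mrel_eq_Ln_rel Ln_rel_eq_iff)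
    with 2 show ?thesis
      by blast
  qed
qed

lemma covers_TrL_iff:
  "covers (TrL n) X Y \<longleftrightarrow>
     covers (Bset n) X Y \<or> covers (Tset n) X Y \<or>
     (\<exists>i<n. X = Bcoatom n i \<and> Y = Mrel n i) \<or> (\<exists>i<n. X = Mrel n i \<and> Y = Tatom n i) \<or>
     (X = Btop n \<and> Y = Tbot n)"
proof
  assume cov: "covers (TrL n) X Y"
  note X = coversD(1)[OF cov] and Y = coversD(2)[OF cov]
  consider "Y \<in> Bset n" | "X \<in> Tset n" | "Y \<in> Mset n" | "X \<notin> Tset n" "Y \<in> Tset n"
    using Y unfolding TrL_eq_blocks by blast
  then show "covers (Bset n) X Y \<or> covers (Tset n) X Y \<or>
     (\<exists>i<n. X = Bcoatom n i \<and> Y = Mrel n i) \<or> (\<exists>i<n. X = Mrel n i \<and> Y = Tatom n i) \<or>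
     (X = Btop n \<and> Y = Tbot n)"
  proof cases
    case 1
    then have "X \<in> Bset n"
      using Bset_downward_closed X psubset_imp_subset[OF coversD(3)[OF cov]] by blast
    with 1 show ?thesis
      using covers_subfamily[OF cov Bset_subset_TrL] by blast
  next
    case 2
    then have "Y \<in> Tset n"
      using Tset_upward_closed Y psubset_imp_subset[OF coversD(3)[OF cov]] by blast
    with 2 show ?thesis
      using covers_subfamily[OF cov Tset_subset_TrL] by blast
  next
    case 3
    then show ?thesis
      using covers_TrL_into_Mset[OF cov] by blast
  next
    case 4
    then show ?thesis
      using covers_TrL_into_Tset[OF cov] by blast
  qed
qed (auto intro: covers_TrL_if_covers_Bset covers_TrL_if_covers_Tset covers_Bcoatom_Mrel
    covers_Mrel_Tatom covers_Btop_Tbot)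

lemma inj_on_Bcoatom: "inj_on (Bcoatom n) {..<n}"
  by (auto simp: inj_on_def Ln_rel_eq_iff)

lemma inj_on_Tatom: "inj_on (Tatom n) {..<n}"
  by (auto simp: inj_on_def Ln_rel_eq_iff)

lemma bij_betw_inv_into_comp:
  "inj_on f A \<Longrightarrow> inj_on g A \<Longrightarrow> bij_betw (g \<circ> inv_into A f) (f ` A) (g ` A)"
  by (rule bij_betw_trans[OF bij_betw_inv_into]) (simp_all add: inj_on_imp_bij_betw)

lemma covers_TrL_matchings:
  "\<exists>\<phi> \<psi>. bij_betw \<phi> (Bcoatom n ` {..<n}) (Mset n) \<and> bij_betw \<psi> (Tatom n ` {..<n}) (Mset n) \<and>
     (\<forall>X Y. covers (TrL n) X Y \<longleftrightarrow>
        (X \<in> Bset n \<and> Y \<in> Bset n \<and> covers (Bset n) X Y) \<or>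
        (X \<in> Tset n \<and> Y \<in> Tset n \<and> covers (Tset n) X Y) \<or>
        (X \<in> Bcoatom n ` {..<n} \<and> Y = \<phi> X) \<or> (Y \<in> Tatom n ` {..<n} \<and> X = \<psi> Y) \<or>
        (X = Btop n \<and> Y = Tbot n))"
proof (rule exI[of _ "Mrel n \<circ> inv_into {..<n} (Bcoatom n)"],
    rule exI[of _ "Mrel n \<circ> inv_into {..<n} (Tatom n)"], intro conjI allI)
  show "bij_betw (Mrel n \<circ> inv_into {..<n} (Bcoatom n)) (Bcoatom n ` {..<n}) (Mset n)"
    "bij_betw (Mrel n \<circ> inv_into {..<n} (Tatom n)) (Tatom n ` {..<n}) (Mset n)"
    unfolding Mset_def using inj_on_Bcoatom inj_on_Tatom bij_betw_imp_inj_on[OF bij_betw_Mset]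
    by (simp_all add: bij_betw_inv_into_comp)
next
  fix X Y
  show "covers (TrL n) X Y \<longleftrightarrow>
      (X \<in> Bset n \<and> Y \<in> Bset n \<and> covers (Bset n) X Y) \<or>
      (X \<in> Tset n \<and> Y \<in> Tset n \<and> covers (Tset n) X Y) \<or>
      (X \<in> Bcoatom n ` {..<n} \<and> Y = (Mrel n \<circ> inv_into {..<n} (Bcoatom n)) X) \<or>
      (Y \<in> Tatom n ` {..<n} \<and> X = (Mrel n \<circ> inv_into {..<n} (Tatom n)) Y) \<or>
      (X = Btop n \<and> Y = Tbot n)"
    unfolding covers_TrL_iff
    using coversD(1,2)[of "Bset n" X Y] coversD(1,2)[of "Tset n" X Y]
    by (auto simp: inv_into_f_f[OF inj_on_Bcoatom] inv_into_f_f[OF inj_on_Tatom])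
qed

lemma Bset_order_iso_Pow:
  "\<exists>f. bij_betw f (Pow {..<n}) (Bset n) \<and>
     (\<forall>S\<in>Pow {..<n}. \<forall>S'\<in>Pow {..<n}. S \<subseteq> S' \<longleftrightarrow> f S \<subseteq> f S')"
  by (intro exI[of _ "\<lambda>A. Ln_rel n A False {}"] conjI bij_betw_Bset) (simp add: Ln_rel_subset_iff)

lemma Tset_order_iso_Pow:
  "\<exists>g. bij_betw g (Pow {..<n}) (Tset n) \<and>
     (\<forall>S\<in>Pow {..<n}. \<forall>S'\<in>Pow {..<n}. S \<subseteq> S' \<longleftrightarrow> g S \<subseteq> g S')"
  by (intro exI[of _ "\<lambda>C. Ln_rel n {..<n} True C"] conjI bij_betw_Tset) (simp add: Ln_rel_subset_iff)

theorem proposition5p2: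
  fixes n :: nat
  shows "card (TrL n) = 2 ^ (n + 1) + n \<and>
    (n \<ge> 1 \<longrightarrow>
      (let B = Bset n; M = Mset n; T = Tset n;
           maxB = (GREATEST X. X \<in> B); minT = (LEAST X. X \<in> T);
           Bsub = {X. covers B X maxB}; Tsub = {Y. covers T minT Y} in
        B \<union> M \<union> T = TrL n \<and> B \<inter> M = {} \<and> B \<inter> T = {} \<and> M \<inter> T = {} \<and>
        card M = n \<and>
        (\<exists>f. bij_betw f (Pow {..<n}) B \<and>
              (\<forall>S\<in>Pow {..<n}. \<forall>S'\<in>Pow {..<n}. S \<subseteq> S' \<longleftrightarrow> f S \<subseteq> f S')) \<and>
        (\<exists>g. bij_betw g (Pow {..<n}) T \<and>
              (\<forall>S\<in>Pow {..<n}. \<forall>S'\<in>Pow {..<n}. S \<subseteq> S' \<longleftrightarrow> g S \<subseteq> g S')) \<and>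
        maxB \<in> B \<and> (\<forall>X\<in>B. X \<subseteq> maxB) \<and> minT \<in> T \<and> (\<forall>X\<in>T. minT \<subseteq> X) \<and>
        card Bsub = n \<and> card Tsub = n \<and>
        (\<exists>\<phi> \<psi>. bij_betw \<phi> Bsub M \<and> bij_betw \<psi> Tsub M \<and>
          (\<forall>X Y. covers (TrL n) X Y \<longleftrightarrow>
             (X \<in> B \<and> Y \<in> B \<and> covers B X Y) \<or>
             (X \<in> T \<and> Y \<in> T \<and> covers T X Y) \<or>
             (X \<in> Bsub \<and> Y = \<phi> X) \<or>
             (Y \<in> Tsub \<and> X = \<psi> Y) \<or>
             (X = maxB \<and> Y = minT)))))"
proof -
  have "card (Mset n) = n" "card (Bcoatom n ` {..<n}) = n" "card (Tatom n ` {..<n}) = n"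
    using bij_betw_same_card[OF bij_betw_Mset] card_image[OF inj_on_Bcoatom]
      card_image[OF inj_on_Tatom] by simp_all
  moreover have "Btop n \<in> Bset n" "\<forall>X\<in>Bset n. X \<subseteq> Btop n"
    "Tbot n \<in> Tset n" "\<forall>X\<in>Tset n. Tbot n \<subseteq> X"
    by (simp_all add: Bset_mem Tset_mem Bset_subset_Btop Tbot_subset_Tset)
  ultimately show ?thesis
    unfolding Let_def Greatest_Bset Least_Tset Bset_lower_covers_Btop Tset_upper_covers_Tbot
    using card_TrL TrL_eq_blocks[symmetric] blocks_disjoint Bset_order_iso_Pow Tset_order_iso_Pow
      covers_TrL_matchings
    by (intro conjI impI) assumption+
qed

end
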